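(* Under $\mathcal H_0(\boldsymbol T):\boldsymbol T\boldsymbol\mu=\mathbf 0$ and one of the asymptotic frameworks (I)–(V), let $f_P=\operatorname{tr}^3((\boldsymbol T\boldsymbol V_N)^2)/\operatorname{tr}^2((\boldsymbol T\boldsymbol V_N)^3)$ and $K_{f_P}=(\chi^2_{f_P}-f_P)/\sqrt{2f_P}$, where $\chi^2_{f}$ denotes a chi-squared random variable with (real) $f>0$ degrees of freedom. Then (a) if $\beta_1\to0$, $K_{f_P}$ converges in distribution to $\mathcal N(0,1)$; (b) if $\beta_1\to1$, $K_{f_P}$ converges in distribution to $(\chi^2_1-1)/\sqrt2$.
   Context: Model: there are $a$ independent groups; for $i=1,\dots,a$, $j=1,\dots,n_i$, $\boldsymbol X_{i,j}\sim\mathcal N_d(\boldsymbol\mu_i,\boldsymbol\Sigma)$ independent, $\boldsymbol\Sigma$ a common positive definite $d\times d$ matrix, $N=\sum_in_i$, $n_{\max}=\max_in_i$. $\boldsymbol T=\boldsymbol T_W\otimes\boldsymbol T_S$ with $\boldsymbol T_W$ ($a\times a$) and $\boldsymbol T_S$ ($d\times d$) nonzero symmetric idempotent matrices. $\boldsymbol V_N=\bigoplus_{i=1}^a\frac{N}{n_i}\boldsymbol\Sigma$ (block diagonal); $\lambda_1\ge\dots\ge\lambda_{ad}$ are the eigenvalues of $\boldsymbol T\boldsymbol V_N\boldsymbol T$ and $\beta_1=\lambda_1/\sqrt{\sum_{\ell=1}^{ad}\lambda_\ell^2}$. Asymptotic frameworks: all quantities may depend on an index along which $N\to\infty$, and one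 of the following holds (quantities not listed stay bounded): (I) $a\to\infty$; (II) $a,d\to\infty$; (III) $a,n_{\max}\to\infty$; (IV) $d,n_{\max}\to\infty$; (V) $a,d,n_{\max}\to\infty$. *)

theory Defs
  imports "HOL-Probability.Probability" "Jordan_Normal_Form.Jordan_Normal_Form"
begin

definition mtrace :: "real Matrix.mat \<Rightarrow> real" where
  "mtrace A = (\<Sum>i<dim_row A. A $$ (i, i))"

definition sym_idem_nonzero :: "nat \<Rightarrow> real Matrix.mat \<Rightarrow> bool" where
  "sym_idem_nonzero n A \<longleftrightarrow> A \<in> carrier_mat n n \<and> transpose_mat A = A \<and> A * A = A
      \<and> A \<noteq> 0\<^sub>m n n"

definition pos_def_mat :: "nat \<Rightarrow> real Matrix.mat \<Rightarrow> bool" where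
  "pos_def_mat n A \<longleftrightarrow> A \<in> carrier_mat n n \<and> transpose_mat A = A \<and>
      (\<forall>v \<in> carrier_vec n. v \<noteq> 0\<^sub>v n \<longrightarrow> v \<bullet> (A *\<^sub>v v) > 0)"

definition kron :: "nat \<Rightarrow> nat \<Rightarrow> real Matrix.mat \<Rightarrow> real Matrix.mat \<Rightarrow> real Matrix.mat" where
  "kron a d A B = Matrix.mat (a*d) (a*d) (\<lambda>(r, c). A $$ (r div d, c div d) * B $$ (r mod d, c mod d))"

text \<open>Block-diagonal matrix  V_N = \<oplus>_{i<a} (N / n_i) \<Sigma>, groups indexed 0..a-1.\<close>
definition VN :: "nat \<Rightarrow> nat \<Rightarrow> (nat \<Rightarrow> nat) \<Rightarrow> real Matrix.mat \<Rightarrow> real Matrix.mat" where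
  "VN a d n \<Sigma> = Matrix.mat (a*d) (a*d) (\<lambda>(r, c).
      if r div d = c div d
      then real (\<Sum>i<a. n i) / real (n (r div d)) * \<Sigma> $$ (r mod d, c mod d)
      else 0)"

definition eigvals :: "real Matrix.mat \<Rightarrow> real multiset" where
  "eigvals A = proots (char_poly A)"

definition beta1 :: "real Matrix.mat \<Rightarrow> real" where
  "beta1 A = Max (set_mset (eigvals A)) / sqrt (sum_mset (image_mset (\<lambda>x. x\<^sup>2) (eigvals A)))"

definition fP :: "real Matrix.mat \<Rightarrow> real Matrix.mat \<Rightarrow> real" where
  "fP T V = (mtrace ((T * V) ^\<^sub>m 2)) ^ 3 / (mtrace ((T * V) ^\<^sub>m 3)) ^ 2"

definition chisq_density :: "real \<Rightarrow> real \<Rightarrow> real" where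
  "chisq_density f x = (if x > 0 then x powr (f/2 - 1) * exp (- x/2) / (2 powr (f/2) * Gamma (f/2)) else 0)"

definition chisq_distribution :: "real \<Rightarrow> real measure" where
  "chisq_distribution f = density lborel (chisq_density f)"

definition K_distribution :: "real \<Rightarrow> real measure" where
  "K_distribution f = distr (chisq_distribution f) borel (\<lambda>x. (x - f) / sqrt (2 * f))"

end

theory Submission
  imports Defs "Jordan_Normal_Form.Schur_Decomposition" "HOL-Real_Asymp.Real_Asymp"
begin

text \<open>
  The matrix \<open>T V\<^sub>N T\<close> is symmetric positive semidefinite, so its eigenvalues
  \<open>\<lambda>\<^sub>l\<close> are real and nonnegative, and since \<open>T\<close> is idempotent,
  \<open>tr ((T V\<^sub>N)^k) = \<Sum>\<^sub>l \<lambda>\<^sub>l^k\<close> for \<open>k \<ge> 1\<close>. From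
  \<open>\<lambda>\<^sub>1^3 \<le> \<Sum>\<^sub>l \<lambda>\<^sub>l^3 \<le> \<lambda>\<^sub>1 \<Sum>\<^sub>l \<lambda>\<^sub>l^2\<close> one gets
  \<open>1/\<beta>\<^sub>1^2 \<le> f\<^sub>P \<le> 1/\<beta>\<^sub>1^6\<close>, so \<open>\<beta>\<^sub>1 \<rightarrow> 0\<close> forces
  \<open>f\<^sub>P \<rightarrow> \<infinity>\<close> and \<open>\<beta>\<^sub>1 \<rightarrow> 1\<close> forces \<open>f\<^sub>P \<rightarrow> 1\<close>.

  What remains is a statement about the family \<open>K\<^sub>f\<close> alone. Its distribution function is
  continuous in \<open>f > 0\<close>, by dominated convergence for the chi-squared densities. With
  \<open>s = sqrt (f/2)\<close>, the density of \<open>K\<^sub>f\<close> is proportional to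
  \<open>(1 + y/s) powr (s^2 - 1) * exp (- s y)\<close>, which tends to \<open>exp (- y^2/2)\<close> as
  \<open>f \<rightarrow> \<infinity>\<close> under the integrable bound \<open>exp (2 - \<bar>y\<bar>/4)\<close>.
\<close>

section \<open>Real symmetric matrices\<close>

interpretation of_real_poly_hom: map_poly_comm_ring_hom "of_real :: real \<Rightarrow> complex" ..

lemma map_poly_of_real_prod_linear:
  "map_poly (of_real :: real \<Rightarrow> complex) (\<Prod>r\<leftarrow>rs. [:-r, 1:]) = (\<Prod>r\<leftarrow>rs. [:-of_real r, 1:])"
proof (induction rs)
  case (Cons r rs)
  have "map_poly (of_real :: real \<Rightarrow> complex) ([:-r, 1:] * (\<Prod>s\<leftarrow>rs. [:-s, 1:]))
     = map_poly of_real [:-r, 1:] * map_poly of_real (\<Prod>s\<leftarrow>rs. [:-s, 1:])"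
    by (rule of_real_poly_hom.hom_mult)
  then show ?case using Cons by simp
qed simp

lemma symmetric_mat_entry:
  assumes "A \<in> carrier_mat n n" "transpose_mat A = A" "i < n" "j < n"
  shows "A $$ (i, j) = A $$ (j, i)"
  using arg_cong[OF assms(2), of "\<lambda>B. B $$ (i, j)"] assms(1,3,4) by auto

lemma eigenvalue_of_real_symmetric_is_real:
  fixes A :: "real mat"
  assumes A: "A \<in> carrier_mat n n" and sym: "transpose_mat A = A"
    and e: "eigenvalue (map_mat complex_of_real A) e"
  shows "Im e = 0"
proof -
  let ?A = "map_mat complex_of_real A"
  obtain v where "eigenvector ?A v e" using e unfolding eigenvalue_def by blast
  then have v: "v \<in> carrier_vec n" "v \<noteq> 0\<^sub>v n" and ev: "?A *\<^sub>v v = e \<cdot>\<^sub>v v"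
    using A by (auto simp: eigenvector_def)
  have Av: "(?A *\<^sub>v v) $ i = (\<Sum>j<n. of_real (A $$ (i, j)) * v $ j)" if "i < n" for i
    using that A v by (auto simp: mult_mat_vec_def scalar_prod_def lessThan_atLeast0 intro!: sum.cong)
  define S where "S = (\<Sum>i<n. cnj (v $ i) * (?A *\<^sub>v v) $ i)"
  define w where "w = (\<Sum>i<n. (cmod (v $ i))\<^sup>2)"
  have "cnj S = (\<Sum>i<n. v $ i * (\<Sum>j<n. of_real (A $$ (i, j)) * cnj (v $ j)))"
    unfolding S_def by (auto simp: Av sum_distrib_left intro!: sum.cong)
  also have "\<dots> = (\<Sum>j<n. cnj (v $ j) * (\<Sum>i<n. of_real (A $$ (j, i)) * v $ i))"
    unfolding sum_distrib_left
    by (subst (2) sum.swap) (auto simp: symmetric_mat_entry[OF A sym] mult_ac intro!: sum.cong)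
  also have "\<dots> = S" unfolding S_def by (auto simp: Av)
  finally have S_real: "cnj S = S" .
  have S_eq: "S = e * of_real w"
    unfolding S_def w_def ev of_real_sum using v
    by (auto simp: sum_distrib_left mult.commute[of "cnj _"] complex_norm_square[symmetric] intro!: sum.cong)
  obtain i where i: "i < n" "v $ i \<noteq> 0" using v by (auto simp: vec_eq_iff)
  have "0 < w" unfolding w_def by (rule sum_pos2[of _ i]) (use i in auto)
  then have "cnj e = e" using S_real unfolding S_eq by simp
  then show ?thesis by (simp add: complex_eq_iff)
qed

lemma char_poly_real_symmetric_splits:
  fixes A :: "real mat"
  assumes A: "A \<in> carrier_mat n n" and sym: "transpose_mat A = A"
  obtains rs where "char_poly A = (\<Prod>r\<leftarrow>rs. [:-r, 1:])"
proof -
  let ?A = "map_mat complex_of_real A"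
  have A': "?A \<in> carrier_mat n n" using A by simp
  obtain es where es: "char_poly ?A = (\<Prod>e\<leftarrow>es. [:-e, 1:])"
    using char_poly_factorized[OF A'] by blast
  have real: "e = of_real (Re e)" if "e \<in> set es" for e
  proof -
    have "poly (char_poly ?A) e = 0" using that unfolding es by (auto simp: poly_prod_list_zero_iff)
    then have "eigenvalue ?A e" using eigenvalue_root_char_poly[OF A'] by simp
    then show ?thesis using eigenvalue_of_real_symmetric_is_real[OF A sym] by (simp add: complex_eq_iff)
  qed
  define rs where "rs = map Re es"
  have es_rs: "es = map of_real rs" unfolding rs_def using real by (induction es) auto
  have "char_poly ?A = map_poly of_real (char_poly A)"
    using of_real_hom.char_poly_hom[OF A] by simp
  then have "map_poly of_real (char_poly A) = (\<Prod>e\<leftarrow>es. [:-e, 1:])" using es by simp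
  also have "\<dots> = map_poly (of_real :: real \<Rightarrow> complex) (\<Prod>r\<leftarrow>rs. [:-r, 1:])"
    unfolding es_rs by (simp add: map_poly_of_real_prod_linear o_def)
  finally have "char_poly A = (\<Prod>r\<leftarrow>rs. [:-r, 1:])" by (auto simp: poly_eq_iff coeff_map_poly)
  then show thesis by (rule that)
qed

lemma proots_prod_linear: "proots (\<Prod>r\<leftarrow>rs. [:-r, 1:]) = mset (rs :: 'a :: idom list)"
proof (induction rs)
  case (Cons r rs)
  have "(\<Prod>s\<leftarrow>rs. [:-s, 1::'a:]) \<noteq> 0" by (auto simp: prod_list_zero_iff)
  then have "proots ([:-r, 1:] * (\<Prod>s\<leftarrow>rs. [:-s, 1:])) = proots [:-r, 1:] + proots (\<Prod>s\<leftarrow>rs. [:-s, 1::'a:])"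
    by (intro proots_mult) auto
  then show ?case using Cons by (simp add: proots_linear_factor)
qed simp

lemma mtrace_mult_commute:
  fixes X Y :: "real mat"
  assumes "X \<in> carrier_mat n m" "Y \<in> carrier_mat m n"
  shows "mtrace (X * Y) = mtrace (Y * X)"
proof -
  have "mtrace (X * Y) = (\<Sum>i<n. \<Sum>j<m. X $$ (i, j) * Y $$ (j, i))"
    using assms by (auto simp: mtrace_def scalar_prod_def lessThan_atLeast0 intro!: sum.cong)
  also have "\<dots> = (\<Sum>j<m. \<Sum>i<n. Y $$ (j, i) * X $$ (i, j))"
    by (subst sum.swap) (auto simp: mult.commute)
  also have "\<dots> = mtrace (Y * X)"
    using assms by (auto simp: mtrace_def scalar_prod_def lessThan_atLeast0 intro!: sum.cong)
  finally show ?thesis .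
qed

lemma upper_triangular_mult:
  fixes B C :: "'a :: comm_semiring_0 mat"
  assumes B: "B \<in> carrier_mat n n" "upper_triangular B" and C: "C \<in> carrier_mat n n" "upper_triangular C"
  shows "upper_triangular (B * C)" and "\<And>i. i < n \<Longrightarrow> (B * C) $$ (i, i) = B $$ (i, i) * C $$ (i, i)"
proof -
  have entry: "(B * C) $$ (i, j) = (\<Sum>l<n. B $$ (i, l) * C $$ (l, j))" if "i < n" "j < n" for i j
    using that B C by (auto simp: scalar_prod_def lessThan_atLeast0 intro!: sum.cong)
  have B0: "B $$ (i, l) = 0" if "l < i" "i < n" for i l using B that by (auto simp: upper_triangular_def)
  have C0: "C $$ (l, j) = 0" if "j < l" "l < n" for l j using C that by (auto simp: upper_triangular_def)
  show "upper_triangular (B * C)"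
  proof (rule upper_triangularI)
    fix i j assume ij: "j < i" "i < dim_row (B * C)"
    then have "B $$ (i, l) * C $$ (l, j) = 0" if "l < n" for l
      using B0 C0 that B by (cases "l < i") auto
    then show "(B * C) $$ (i, j) = 0" using ij B by (simp add: entry)
  qed
  fix i assume i: "i < n"
  have "B $$ (i, l) * C $$ (l, i) = 0" if "l < n" "l \<noteq> i" for l
    using B0 C0 that i by (cases "l < i") auto
  then have "(\<Sum>l\<in>{..<n} - {i}. B $$ (i, l) * C $$ (l, i)) = 0" by (intro sum.neutral) auto
  moreover have "(\<Sum>l<n. B $$ (i, l) * C $$ (l, i))
      = B $$ (i, i) * C $$ (i, i) + (\<Sum>l\<in>{..<n} - {i}. B $$ (i, l) * C $$ (l, i))"
    using i by (intro sum.remove) auto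
  ultimately have "(\<Sum>l<n. B $$ (i, l) * C $$ (l, i)) = B $$ (i, i) * C $$ (i, i)" by simp
  then show "(B * C) $$ (i, i) = B $$ (i, i) * C $$ (i, i)" using i by (simp add: entry)
qed

lemma upper_triangular_pow:
  fixes B :: "'a :: comm_semiring_1 mat"
  assumes B: "B \<in> carrier_mat n n" "upper_triangular B"
  shows "upper_triangular (B ^\<^sub>m k) \<and> (\<forall>i<n. (B ^\<^sub>m k) $$ (i, i) = B $$ (i, i) ^ k)"
proof (induction k)
  case (Suc k)
  have "B ^\<^sub>m k \<in> carrier_mat n n" using B by simp
  then show ?case using Suc upper_triangular_mult[OF _ _ B] by (simp add: mult.commute)
qed (use B in auto)

lemma mtrace_pow_char_poly_roots:
  fixes A :: "real mat"
  assumes A: "A \<in> carrier_mat n n" and cp: "char_poly A = (\<Prod>r\<leftarrow>rs. [:-r, 1:])"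
  shows "mtrace (A ^\<^sub>m k) = (\<Sum>r\<leftarrow>rs. r ^ k)"
proof -
  obtain B P Q where sd: "schur_decomposition A rs = (B, P, Q)" by (cases "schur_decomposition A rs") auto
  from schur_decomposition[OF A cp sd] have sim: "similar_mat_wit A B P Q"
    and ut: "upper_triangular B" and diag: "diag_mat B = rs" by auto
  from similar_mat_witD2[OF A sim] have B: "B \<in> carrier_mat n n" and P: "P \<in> carrier_mat n n"
    and Q: "Q \<in> carrier_mat n n" and QP: "Q * P = 1\<^sub>m n" by auto
  have Bk: "B ^\<^sub>m k \<in> carrier_mat n n" using B by simp
  have "mtrace (A ^\<^sub>m k) = mtrace (Q * (P * B ^\<^sub>m k))"
    unfolding similar_mat_wit_pow_id[OF sim] by (rule mtrace_mult_commute) (use P Bk Q in auto)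
  also have "Q * (P * B ^\<^sub>m k) = B ^\<^sub>m k"
    using P Bk Q QP by (simp flip: assoc_mult_mat[OF Q P Bk] add: left_mult_one_mat[OF Bk])
  also have "mtrace (B ^\<^sub>m k) = (\<Sum>i<n. B $$ (i, i) ^ k)"
    using upper_triangular_pow[OF B ut, of k] B by (simp add: mtrace_def)
  also have "\<dots> = (\<Sum>r\<leftarrow>rs. r ^ k)"
    unfolding diag[symmetric] diag_mat_def using B
    by (simp add: interv_sum_list_conv_sum_set_nat lessThan_atLeast0)
  finally show ?thesis .
qed

section \<open>Kronecker products and the matrix \<open>V\<^sub>N\<close>\<close>

lemma sum_lessThan_blocks:
  fixes f :: "nat \<Rightarrow> 'a :: comm_monoid_add"
  shows "(\<Sum>r<a * d. f r) = (\<Sum>i<a. \<Sum>k<d. f (i * d + k))"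
proof -
  have "sum f {i * d..<i * d + d} = (\<Sum>k<d. f (i * d + k))" for i
    using sum.shift_bounds_nat_ivl[of f 0 "i * d" d] by (simp add: atLeast0LessThan add.commute)
  then show ?thesis by (simp flip: sum.nat_group)
qed

lemma block_index_div [simp]: "k < d \<Longrightarrow> (i * d + k) div d = (i :: nat)"
  and block_index_mod [simp]: "k < d \<Longrightarrow> (i * d + k) mod d = (k :: nat)"
  by auto

lemma block_index_less: "i < a \<Longrightarrow> k < d \<Longrightarrow> i * d + k < a * (d :: nat)"
proof -
  assume "i < a" "k < d"
  then have "i * d + k < (i + 1) * d" by simp
  also have "\<dots> \<le> a * d" using \<open>i < a\<close> by (intro mult_right_mono) auto
  finally show ?thesis .
qed

lemma block_div_less: "r < a * d \<Longrightarrow> r div d < (a :: nat)"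
  by (simp add: less_mult_imp_div_less)

lemma block_mod_less: "r < a * d \<Longrightarrow> r mod d < (d :: nat)"
  by (cases "d = 0") auto

lemma mat_nonzero_entry:
  assumes "A \<in> carrier_mat n m" "A \<noteq> 0\<^sub>m n m"
  obtains i j where "i < n" "j < m" "A $$ (i, j) \<noteq> 0"
proof -
  have "\<exists>i<n. \<exists>j<m. A $$ (i, j) \<noteq> 0"
  proof (rule ccontr)
    assume "\<not> ?thesis"
    then have "A = 0\<^sub>m n m" using assms(1) by (intro eq_matI) auto
    then show False using assms(2) by simp
  qed
  then show thesis using that by blast
qed

lemma mat_nonzero_mult_vec_nonzero:
  fixes A :: "'a :: semiring_1 mat"
  assumes "A \<in> carrier_mat n m" "A \<noteq> 0\<^sub>m n m"
  obtains v where "v \<in> carrier_vec m" "A *\<^sub>v v \<noteq> 0\<^sub>v n"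
proof -
  obtain i j where ij: "i < n" "j < m" "A $$ (i, j) \<noteq> 0" using mat_nonzero_entry[OF assms] .
  have "(A *\<^sub>v unit_vec m j) $ i \<noteq> 0" using ij assms(1) by simp
  then have "A *\<^sub>v unit_vec m j \<noteq> 0\<^sub>v n" using ij(1) by auto
  then show thesis using that[of "unit_vec m j"] by simp
qed

lemma index_kron:
  "r < a * d \<Longrightarrow> c < a * d \<Longrightarrow> kron a d A B $$ (r, c) = A $$ (r div d, c div d) * B $$ (r mod d, c mod d)"
  by (simp add: kron_def)

lemma dim_kron [simp]: "dim_row (kron a d A B) = a * d" "dim_col (kron a d A B) = a * d"
  by (simp_all add: kron_def)

lemma kron_carrier [simp]: "kron a d A B \<in> carrier_mat (a * d) (a * d)"
  by (intro carrier_matI) simp_all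

lemma transpose_kron:
  assumes "A \<in> carrier_mat a a" "B \<in> carrier_mat d d"
  shows "transpose_mat (kron a d A B) = kron a d (transpose_mat A) (transpose_mat B)"
proof (rule eq_matI)
  fix r c assume "r < dim_row (kron a d (transpose_mat A) (transpose_mat B))"
    "c < dim_col (kron a d (transpose_mat A) (transpose_mat B))"
  then have r: "r < a * d" and c: "c < a * d" by simp_all
  show "transpose_mat (kron a d A B) $$ (r, c) = kron a d (transpose_mat A) (transpose_mat B) $$ (r, c)"
    using assms block_div_less[OF r] block_div_less[OF c] block_mod_less[OF r] block_mod_less[OF c] r c
    by (simp add: index_kron)
qed simp_all

lemma kron_mult:
  assumes A: "A \<in> carrier_mat a a" and B: "B \<in> carrier_mat d d"
    and C: "C \<in> carrier_mat a a" and D: "D \<in> carrier_mat d d"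
  shows "kron a d A B * kron a d C D = kron a d (A * C) (B * D)"
proof (rule eq_matI)
  fix r c assume "r < dim_row (kron a d (A * C) (B * D))" "c < dim_col (kron a d (A * C) (B * D))"
  then have r: "r < a * d" and c: "c < a * d" by auto
  have "(kron a d A B * kron a d C D) $$ (r, c) = (\<Sum>s<a * d. kron a d A B $$ (r, s) * kron a d C D $$ (s, c))"
    using r c by (auto simp: scalar_prod_def lessThan_atLeast0 intro!: sum.cong)
  also have "\<dots> = (\<Sum>j<a. \<Sum>l<d. (A $$ (r div d, j) * C $$ (j, c div d)) * (B $$ (r mod d, l) * D $$ (l, c mod d)))"
    using r c by (simp add: sum_lessThan_blocks index_kron block_index_less mult_ac)
  also have "\<dots> = (\<Sum>j<a. A $$ (r div d, j) * C $$ (j, c div d)) * (\<Sum>l<d. B $$ (r mod d, l) * D $$ (l, c mod d))"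
    by (simp add: sum_product)
  also have "(\<Sum>j<a. A $$ (r div d, j) * C $$ (j, c div d)) = (A * C) $$ (r div d, c div d)"
    using A C block_div_less[OF r] block_div_less[OF c]
    by (auto simp: scalar_prod_def lessThan_atLeast0 intro!: sum.cong)
  also have "(\<Sum>l<d. B $$ (r mod d, l) * D $$ (l, c mod d)) = (B * D) $$ (r mod d, c mod d)"
    using B D block_mod_less[OF r] block_mod_less[OF c]
    by (auto simp: scalar_prod_def lessThan_atLeast0 intro!: sum.cong)
  finally show "(kron a d A B * kron a d C D) $$ (r, c) = kron a d (A * C) (B * D) $$ (r, c)"
    using r c by (simp add: index_kron)
qed auto

lemma kron_nonzero:
  assumes "A \<in> carrier_mat a a" "A \<noteq> 0\<^sub>m a a" "B \<in> carrier_mat d d" "B \<noteq> 0\<^sub>m d d"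
  shows "kron a d A B \<noteq> 0\<^sub>m (a * d) (a * d)"
proof -
  obtain i j where ij: "i < a" "j < a" "A $$ (i, j) \<noteq> 0" using mat_nonzero_entry assms(1,2) .
  obtain k l where kl: "k < d" "l < d" "B $$ (k, l) \<noteq> 0" using mat_nonzero_entry assms(3,4) .
  have "kron a d A B $$ (i * d + k, j * d + l) \<noteq> 0"
    using ij kl by (simp add: index_kron block_index_less)
  then show ?thesis using ij kl block_index_less by auto
qed

lemma sym_idem_nonzero_kron:
  assumes "sym_idem_nonzero a A" "sym_idem_nonzero d B"
  shows "sym_idem_nonzero (a * d) (kron a d A B)"
proof -
  have A: "A \<in> carrier_mat a a" "transpose_mat A = A" "A * A = A" "A \<noteq> 0\<^sub>m a a"
    using assms(1) by (auto simp: sym_idem_nonzero_def)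
  have B: "B \<in> carrier_mat d d" "transpose_mat B = B" "B * B = B" "B \<noteq> 0\<^sub>m d d"
    using assms(2) by (auto simp: sym_idem_nonzero_def)
  show ?thesis
    unfolding sym_idem_nonzero_def using kron_mult[OF A(1) B(1) A(1) B(1)] transpose_kron[OF A(1) B(1)]
      kron_nonzero[OF A(1,4) B(1,4)] A B by simp
qed

lemma VN_carrier: "VN a d n \<Sigma> \<in> carrier_mat (a * d) (a * d)"
  by (simp add: VN_def)

lemma transpose_VN:
  assumes "\<Sigma> \<in> carrier_mat d d" "transpose_mat \<Sigma> = \<Sigma>"
  shows "transpose_mat (VN a d n \<Sigma>) = VN a d n \<Sigma>"
proof (rule eq_matI)
  fix r c assume "r < dim_row (VN a d n \<Sigma>)" "c < dim_col (VN a d n \<Sigma>)"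
  then have r: "r < a * d" and c: "c < a * d" by (simp_all add: VN_def)
  show "transpose_mat (VN a d n \<Sigma>) $$ (r, c) = VN a d n \<Sigma> $$ (r, c)"
    using r c symmetric_mat_entry[OF assms block_mod_less[OF r] block_mod_less[OF c]] by (simp add: VN_def)
qed (simp_all add: VN_def)

lemma quadratic_form_VN:
  fixes \<Sigma> :: "real mat"
  assumes \<Sigma>: "\<Sigma> \<in> carrier_mat d d" and u: "u \<in> carrier_vec (a * d)"
  defines "u' \<equiv> \<lambda>i. vec d (\<lambda>k. u $ (i * d + k))"
  shows "u \<bullet> (VN a d n \<Sigma> *\<^sub>v u) = (\<Sum>i<a. real (\<Sum>i<a. n i) / real (n i) * (u' i \<bullet> (\<Sigma> *\<^sub>v u' i)))"
proof -
  let ?c = "\<lambda>i. real (\<Sum>i<a. n i) / real (n i)"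
  have V: "VN a d n \<Sigma> $$ (i * d + k, j * d + l) = (if i = j then ?c i * \<Sigma> $$ (k, l) else 0)"
    if "i < a" "k < d" "j < a" "l < d" for i j k l
    using that by (simp add: VN_def block_index_less)
  have inner: "(\<Sum>j<a. \<Sum>l<d. VN a d n \<Sigma> $$ (i * d + k, j * d + l) * u $ (j * d + l))
      = (\<Sum>l<d. ?c i * \<Sigma> $$ (k, l) * u $ (i * d + l))" if "i < a" "k < d" for i k
  proof -
    have "(\<Sum>j<a. \<Sum>l<d. VN a d n \<Sigma> $$ (i * d + k, j * d + l) * u $ (j * d + l))
        = (\<Sum>j<a. if j = i then (\<Sum>l<d. ?c i * \<Sigma> $$ (k, l) * u $ (i * d + l)) else 0)"
      using that by (intro sum.cong refl) (auto simp: V)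
    then show ?thesis using that by simp
  qed
  have "u \<bullet> (VN a d n \<Sigma> *\<^sub>v u) = (\<Sum>r<a * d. u $ r * (\<Sum>c<a * d. VN a d n \<Sigma> $$ (r, c) * u $ c))"
    using u VN_carrier[of a d n \<Sigma>] by (auto simp: scalar_prod_def mult_mat_vec_def lessThan_atLeast0 intro!: sum.cong)
  also have "\<dots> = (\<Sum>i<a. \<Sum>k<d. u $ (i * d + k) * (\<Sum>j<a. \<Sum>l<d. VN a d n \<Sigma> $$ (i * d + k, j * d + l) * u $ (j * d + l)))"
    by (simp add: sum_lessThan_blocks)
  also have "\<dots> = (\<Sum>i<a. \<Sum>k<d. u $ (i * d + k) * (\<Sum>l<d. ?c i * \<Sigma> $$ (k, l) * u $ (i * d + l)))"
    by (intro sum.cong refl) (simp add: inner)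
  also have "\<dots> = (\<Sum>i<a. ?c i * (u' i \<bullet> (\<Sigma> *\<^sub>v u' i)))"
    using \<Sigma> by (auto simp: u'_def scalar_prod_def mult_mat_vec_def lessThan_atLeast0 sum_distrib_left mult_ac
        intro!: sum.cong)
  finally show ?thesis .
qed

lemma pos_def_VN:
  assumes \<Sigma>: "pos_def_mat d \<Sigma>" and n: "\<And>i. i < a \<Longrightarrow> 0 < n i"
  shows "pos_def_mat (a * d) (VN a d n \<Sigma>)"
proof -
  have \<Sigma>': "\<Sigma> \<in> carrier_mat d d" "transpose_mat \<Sigma> = \<Sigma>"
    and pos: "\<And>w. w \<in> carrier_vec d \<Longrightarrow> w \<noteq> 0\<^sub>v d \<Longrightarrow> 0 < w \<bullet> (\<Sigma> *\<^sub>v w)"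
    using \<Sigma> by (auto simp: pos_def_mat_def)
  let ?w = "\<lambda>u i. vec d (\<lambda>k. u $ (i * d + k))"
  let ?c = "\<lambda>i. real (\<Sum>i<a. n i) / real (n i)"
  have c: "0 < ?c i" if "i < a" for i
  proof -
    have "n i \<le> (\<Sum>i<a. n i)" using that by (intro member_le_sum) auto
    then show ?thesis using n[OF that] by (intro divide_pos_pos) (simp_all flip: of_nat_sum)
  qed
  have term_nonneg: "0 \<le> ?w u i \<bullet> (\<Sigma> *\<^sub>v ?w u i)" for u i
    using pos[of "?w u i"] \<Sigma>'(1) by (cases "?w u i = 0\<^sub>v d") auto
  have summand_nonneg: "0 \<le> ?c i * (?w u i \<bullet> (\<Sigma> *\<^sub>v ?w u i))" if "i < a" for u i
    using mult_nonneg_nonneg[OF less_imp_le[OF c[OF that]] term_nonneg] .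
  have "0 < u \<bullet> (VN a d n \<Sigma> *\<^sub>v u)" if u: "u \<in> carrier_vec (a * d)" "u \<noteq> 0\<^sub>v (a * d)" for u
  proof -
    obtain r where r: "r < a * d" "u $ r \<noteq> 0" using u by (auto simp: vec_eq_iff)
    define i where "i = r div d"
    have i: "i < a" using r(1) by (simp add: i_def block_div_less)
    have "?w u i $ (r mod d) \<noteq> 0" using r block_mod_less[OF r(1)] by (simp add: i_def)
    then have "?w u i \<noteq> 0\<^sub>v d" using block_mod_less[OF r(1)] by (metis index_zero_vec(1))
    then have "0 < ?w u i \<bullet> (\<Sigma> *\<^sub>v ?w u i)" using pos by simp
    then have pos_i: "0 < ?c i * (?w u i \<bullet> (\<Sigma> *\<^sub>v ?w u i))" using c[OF i] by (rule mult_pos_pos[rotated])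
    show ?thesis unfolding quadratic_form_VN[OF \<Sigma>'(1) u(1)]
      by (rule sum_pos2[of _ i]) (use i pos_i summand_nonneg in auto)
  qed
  then show ?thesis using \<Sigma>' by (simp add: pos_def_mat_def VN_carrier transpose_VN)
qed

section \<open>The spectrum of \<open>T V\<^sub>N T\<close>\<close>

lemma quadratic_form_sandwich:
  fixes T V :: "'a :: comm_ring mat"
  assumes T: "T \<in> carrier_mat n n" "transpose_mat T = T" and V: "V \<in> carrier_mat n n"
    and v: "v \<in> carrier_vec n"
  shows "v \<bullet> ((T * V * T) *\<^sub>v v) = (T *\<^sub>v v) \<bullet> (V *\<^sub>v (T *\<^sub>v v))"
proof -
  have "(T * V * T) *\<^sub>v v = T *\<^sub>v (V *\<^sub>v (T *\<^sub>v v))"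
    using T V v by (simp add: assoc_mult_mat_vec[of _ n n _ n])
  then have "v \<bullet> ((T * V * T) *\<^sub>v v) = v \<bullet> (T *\<^sub>v (V *\<^sub>v (T *\<^sub>v v)))" by simp
  also have "v \<bullet> (T *\<^sub>v (V *\<^sub>v (T *\<^sub>v v))) = (transpose_mat T *\<^sub>v v) \<bullet> (V *\<^sub>v (T *\<^sub>v v))"
    by (rule transpose_vec_mult_scalar[symmetric]) (use T V v in auto)
  finally show ?thesis using T(2) by simp
qed

lemma left_absorb_pow:
  fixes T X :: "'a :: semiring_1 mat"
  assumes T: "T \<in> carrier_mat n n" and X: "X \<in> carrier_mat n n" and TX: "T * X = X"
  shows "T * X ^\<^sub>m Suc k = X ^\<^sub>m Suc k"
proof (induction k)
  case 0
  show ?case using T X TX by simp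
next
  case (Suc k)
  have "T * X ^\<^sub>m Suc (Suc k) = T * (X ^\<^sub>m Suc k * X)" by simp
  also have "\<dots> = T * X ^\<^sub>m Suc k * X"
    by (rule assoc_mult_mat[symmetric, OF T pow_carrier_mat[OF X] X])
  finally show ?case using Suc by simp
qed

lemma pow_mult_left_absorb:
  fixes T X :: "'a :: semiring_1 mat"
  assumes T: "T \<in> carrier_mat n n" and X: "X \<in> carrier_mat n n" and TX: "T * X = X"
  shows "(X * T) ^\<^sub>m Suc k = X ^\<^sub>m Suc k * T"
proof (induction k)
  case 0
  show ?case using T X by simp
next
  case (Suc k)
  have Xk: "X ^\<^sub>m Suc k \<in> carrier_mat n n" by (rule pow_carrier_mat[OF X])
  have "(X * T) ^\<^sub>m Suc (Suc k) = X ^\<^sub>m Suc k * T * (X * T)" using Suc by simp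
  also have "\<dots> = X ^\<^sub>m Suc k * (T * X) * T"
    using T X Xk by (simp add: assoc_mult_mat[of _ n n _ n _ n])
  also have "\<dots> = X ^\<^sub>m Suc (Suc k) * T" using TX by simp
  finally show ?case .
qed

lemma mtrace_pow_sandwich:
  assumes T: "T \<in> carrier_mat n n" "T * T = T" and V: "V \<in> carrier_mat n n" and k: "0 < k"
  shows "mtrace ((T * V) ^\<^sub>m k) = mtrace ((T * V * T) ^\<^sub>m k)"
proof -
  obtain j where j: "k = Suc j" using k by (cases k) auto
  have X: "T * V \<in> carrier_mat n n" using T V by simp
  have TX: "T * (T * V) = T * V" using T V by (simp flip: assoc_mult_mat[of T n n T n V n])
  have "mtrace ((T * V * T) ^\<^sub>m k) = mtrace ((T * V) ^\<^sub>m k * T)"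
    unfolding j by (rule arg_cong[OF pow_mult_left_absorb[OF T(1) X TX]])
  also have "\<dots> = mtrace (T * (T * V) ^\<^sub>m k)" by (rule mtrace_mult_commute) (use T X in auto)
  also have "\<dots> = mtrace ((T * V) ^\<^sub>m k)" unfolding j by (simp only: left_absorb_pow[OF T(1) X TX])
  finally show ?thesis by simp
qed

lemma eigenvalue_nonneg_if_psd:
  fixes M :: "real mat"
  assumes M: "M \<in> carrier_mat n n" and psd: "\<And>v. v \<in> carrier_vec n \<Longrightarrow> 0 \<le> v \<bullet> (M *\<^sub>v v)"
    and r: "eigenvalue M r"
  shows "0 \<le> r"
proof -
  obtain v where "eigenvector M v r" using r unfolding eigenvalue_def by blast
  then have v: "v \<in> carrier_vec n" "v \<noteq> 0\<^sub>v n" and ev: "M *\<^sub>v v = r \<cdot>\<^sub>v v"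
    using M by (auto simp: eigenvector_def)
  obtain i where i: "i < n" "v $ i \<noteq> 0" using v by (auto simp: vec_eq_iff)
  have "v \<bullet> v = (\<Sum>j<n. (v $ j)\<^sup>2)" using v by (simp add: scalar_prod_def lessThan_atLeast0 power2_eq_square)
  also have "\<dots> > 0" by (rule sum_pos2[of _ i]) (use i in auto)
  finally have "0 < v \<bullet> v" .
  moreover have "0 \<le> r * (v \<bullet> v)" using psd[OF v(1)] v(1) unfolding ev by simp
  ultimately show ?thesis by (simp add: zero_le_mult_iff)
qed

lemma mtrace_square_symmetric_pos:
  fixes M :: "real mat"
  assumes M: "M \<in> carrier_mat n n" "transpose_mat M = M" "M \<noteq> 0\<^sub>m n n"
  shows "0 < mtrace (M * M)"
proof -
  obtain p q where pq: "p < n" "q < n" "M $$ (p, q) \<noteq> 0" using mat_nonzero_entry M(1,3) .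
  have "mtrace (M * M) = (\<Sum>i<n. \<Sum>j<n. (M $$ (i, j))\<^sup>2)"
    using M(1) by (auto simp: mtrace_def scalar_prod_def lessThan_atLeast0 power2_eq_square
        symmetric_mat_entry[OF M(1,2)] intro!: sum.cong)
  also have "\<dots> > 0"
  proof (rule sum_pos2[of _ p])
    show "0 < (\<Sum>j<n. (M $$ (p, j))\<^sup>2)" by (rule sum_pos2[of _ q]) (use pq in auto)
  qed (use pq in \<open>auto intro: sum_nonneg\<close>)
  finally show ?thesis .
qed

lemma psd_sandwich:
  fixes T V :: "real mat"
  assumes T: "T \<in> carrier_mat n n" "transpose_mat T = T" and V: "pos_def_mat n V"
    and v: "v \<in> carrier_vec n"
  shows "0 \<le> v \<bullet> ((T * V * T) *\<^sub>v v)"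
proof (cases "T *\<^sub>v v = 0\<^sub>v n")
  case True
  have "V \<in> carrier_mat n n" using V by (simp add: pos_def_mat_def)
  then show ?thesis using quadratic_form_sandwich[OF T _ v] True by simp
next
  case False
  then show ?thesis using quadratic_form_sandwich[OF T _ v] V T(1) v
    by (auto simp: pos_def_mat_def intro: less_imp_le)
qed

lemma sandwich_nonzero:
  fixes T V :: "real mat"
  assumes T: "T \<in> carrier_mat n n" "transpose_mat T = T" "T \<noteq> 0\<^sub>m n n" and V: "pos_def_mat n V"
  shows "T * V * T \<noteq> 0\<^sub>m n n"
proof
  assume zero: "T * V * T = 0\<^sub>m n n"
  obtain v where v: "v \<in> carrier_vec n" "T *\<^sub>v v \<noteq> 0\<^sub>v n" using mat_nonzero_mult_vec_nonzero[OF T(1,3)] .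
  have "0 < (T *\<^sub>v v) \<bullet> (V *\<^sub>v (T *\<^sub>v v))" using V v T(1) by (simp add: pos_def_mat_def)
  also have "\<dots> = v \<bullet> ((T * V * T) *\<^sub>v v)"
    using V by (intro quadratic_form_sandwich[OF T(1,2) _ v(1), symmetric]) (simp add: pos_def_mat_def)
  also have "\<dots> = 0"
  proof -
    have "0\<^sub>m n n *\<^sub>v v = 0\<^sub>v n" by (rule eq_vecI) (use v(1) in \<open>auto simp: scalar_prod_def\<close>)
    then show ?thesis using v(1) unfolding zero by simp
  qed
  finally show False by simp
qed

lemma spectrum_sandwich:
  assumes T: "sym_idem_nonzero n T" and V: "pos_def_mat n V"
  obtains rs where "eigvals (T * V * T) = mset rs" "\<forall>r\<in>set rs. 0 \<le> r" "0 < (\<Sum>r\<leftarrow>rs. r ^ 2)"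
    "\<And>k. 0 < k \<Longrightarrow> mtrace ((T * V) ^\<^sub>m k) = (\<Sum>r\<leftarrow>rs. r ^ k)"
proof -
  have T': "T \<in> carrier_mat n n" "transpose_mat T = T" "T * T = T" "T \<noteq> 0\<^sub>m n n"
    using T by (auto simp: sym_idem_nonzero_def)
  have V': "V \<in> carrier_mat n n" "transpose_mat V = V" using V by (auto simp: pos_def_mat_def)
  let ?M = "T * V * T"
  have M: "?M \<in> carrier_mat n n" using T' V' by simp
  have M_sym: "transpose_mat ?M = ?M"
    using T' V' by (simp add: transpose_mult[of _ n n _ n] assoc_mult_mat[of _ n n _ n _ n])
  obtain rs where cp: "char_poly ?M = (\<Prod>r\<leftarrow>rs. [:-r, 1:])"
    using char_poly_real_symmetric_splits[OF M M_sym] .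
  show thesis
  proof (rule that)
    show "eigvals ?M = mset rs" unfolding eigvals_def cp by (rule proots_prod_linear)
    show "\<forall>r\<in>set rs. 0 \<le> r"
    proof
      fix r assume "r \<in> set rs"
      then have "poly (char_poly ?M) r = 0" unfolding cp by (auto simp: poly_prod_list_zero_iff)
      then have "eigenvalue ?M r" using eigenvalue_root_char_poly[OF M] by simp
      then show "0 \<le> r" using eigenvalue_nonneg_if_psd[OF M psd_sandwich[OF T'(1,2) V]] by blast
    qed
    show "mtrace ((T * V) ^\<^sub>m k) = (\<Sum>r\<leftarrow>rs. r ^ k)" if "0 < k" for k
      using mtrace_pow_sandwich[OF T'(1,3) V'(1) that] mtrace_pow_char_poly_roots[OF M cp] by simp
    have "?M ^\<^sub>m 2 = ?M * ?M" using M by (simp add: numeral_eq_Suc)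
    then show "0 < (\<Sum>r\<leftarrow>rs. r ^ 2)"
      using mtrace_square_symmetric_pos[OF M M_sym sandwich_nonzero[OF T'(1,2,4) V]]
        mtrace_pow_char_poly_roots[OF M cp, of 2] by simp
  qed
qed

lemma power_sums_Max_bounds:
  fixes rs :: "real list"
  assumes nn: "\<forall>r\<in>set rs. 0 \<le> r" and ne: "rs \<noteq> []"
  shows "Max (set rs) ^ 3 \<le> (\<Sum>r\<leftarrow>rs. r ^ 3)" and "(\<Sum>r\<leftarrow>rs. r ^ 3) \<le> Max (set rs) * (\<Sum>r\<leftarrow>rs. r ^ 2)"
proof -
  have le_Max: "r \<le> Max (set rs)" if "r \<in> set rs" for r using that by simp
  show "Max (set rs) ^ 3 \<le> (\<Sum>r\<leftarrow>rs. r ^ 3)"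
    by (rule member_le_sum_list) (use nn ne in auto)
  have "(\<Sum>r\<leftarrow>rs. r ^ 3) \<le> (\<Sum>r\<leftarrow>rs. Max (set rs) * r ^ 2)"
  proof (rule sum_list_mono)
    fix r assume "r \<in> set rs"
    then have "r * r ^ 2 \<le> Max (set rs) * r ^ 2" using le_Max by (intro mult_right_mono) auto
    then show "r ^ 3 \<le> Max (set rs) * r ^ 2" by (simp add: power3_eq_cube power2_eq_square)
  qed
  then show "(\<Sum>r\<leftarrow>rs. r ^ 3) \<le> Max (set rs) * (\<Sum>r\<leftarrow>rs. r ^ 2)" by (simp add: sum_list_const_mult)
qed

lemma inverse_beta_powers_bounds:
  fixes rs :: "real list"
  assumes nn: "\<forall>r\<in>set rs. 0 \<le> r" and pos: "0 < (\<Sum>r\<leftarrow>rs. r ^ 2)"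
  defines "\<beta> \<equiv> Max (set rs) / sqrt (\<Sum>r\<leftarrow>rs. r ^ 2)" and "f \<equiv> (\<Sum>r\<leftarrow>rs. r ^ 2) ^ 3 / (\<Sum>r\<leftarrow>rs. r ^ 3) ^ 2"
  shows "0 < \<beta> \<and> 0 < f \<and> 1 / \<beta> ^ 2 \<le> f \<and> f \<le> 1 / \<beta> ^ 6"
proof -
  define s2 s3 lmax where "s2 = (\<Sum>r\<leftarrow>rs. r ^ 2)" and "s3 = (\<Sum>r\<leftarrow>rs. r ^ 3)" and "lmax = Max (set rs)"
  have s2: "0 < s2" using pos by (simp add: s2_def)
  have ne: "rs \<noteq> []" using pos by auto
  obtain r0 where r0: "r0 \<in> set rs" "r0 \<noteq> 0"
  proof -
    have "\<not> (\<forall>r\<in>set rs. r = 0)"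
    proof
      assume "\<forall>r\<in>set rs. r = 0"
      then have "(\<Sum>r\<leftarrow>rs. r ^ 2) = 0" by (induction rs) auto
      then show False using pos by simp
    qed
    then show thesis using that by blast
  qed
  have "r0 \<le> lmax" unfolding lmax_def by (rule Max_ge) (use r0 in auto)
  moreover have "0 < r0" using nn r0 by force
  ultimately have lmax: "0 < lmax" by linarith
  note bounds = power_sums_Max_bounds[OF nn ne, folded s2_def s3_def lmax_def]
  have s3: "0 < s3" using zero_less_power[OF lmax, of 3] bounds(1) by linarith
  have inv_beta2: "1 / \<beta> ^ 2 = s2 / lmax ^ 2" using s2 by (simp add: \<beta>_def s2_def lmax_def power_divide)
  have "1 / \<beta> ^ 2 = s2 ^ 3 / (lmax * s2) ^ 2"
    unfolding inv_beta2 using s2 lmax by (simp add: field_simps power2_eq_square power3_eq_cube)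
  also have "\<dots> \<le> s2 ^ 3 / s3 ^ 2" using bounds(2) s2 s3 by (intro divide_left_mono power_mono mult_pos_pos) auto
  finally have lower: "1 / \<beta> ^ 2 \<le> f" by (simp add: f_def s2_def s3_def)
  have "f \<le> s2 ^ 3 / (lmax ^ 3) ^ 2" unfolding f_def s2_def[symmetric] s3_def[symmetric]
    using bounds(1) s2 lmax by (intro divide_left_mono power_mono mult_pos_pos) auto
  also have "\<dots> = (1 / \<beta> ^ 2) ^ 3" by (simp add: inv_beta2 power_divide flip: power_mult)
  also have "\<dots> = 1 / \<beta> ^ 6" by (simp add: power_divide flip: power_mult)
  finally have upper: "f \<le> 1 / \<beta> ^ 6" .
  have \<beta>_pos: "0 < \<beta>" using lmax s2 by (simp add: \<beta>_def lmax_def s2_def)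
  then have "0 < 1 / \<beta> ^ 2" by simp
  then have "0 < f" using lower by linarith
  with \<beta>_pos lower upper show ?thesis by blast
qed

lemma beta1_fP_bounds:
  assumes "sym_idem_nonzero n T" "pos_def_mat n V"
  shows "0 < beta1 (T * V * T) \<and> 0 < fP T V
    \<and> 1 / beta1 (T * V * T) ^ 2 \<le> fP T V \<and> fP T V \<le> 1 / beta1 (T * V * T) ^ 6"
proof -
  obtain rs where eig: "eigvals (T * V * T) = mset rs" and nn: "\<forall>r\<in>set rs. 0 \<le> r"
    and pos: "0 < (\<Sum>r\<leftarrow>rs. r ^ 2)" and tr: "\<And>k. 0 < k \<Longrightarrow> mtrace ((T * V) ^\<^sub>m k) = (\<Sum>r\<leftarrow>rs. r ^ k)"
    using spectrum_sandwich[OF assms] by blast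
  have "beta1 (T * V * T) = Max (set rs) / sqrt (\<Sum>r\<leftarrow>rs. r ^ 2)"
    by (simp add: beta1_def eig sum_mset_sum_list flip: mset_map)
  moreover have "fP T V = (\<Sum>r\<leftarrow>rs. r ^ 2) ^ 3 / (\<Sum>r\<leftarrow>rs. r ^ 3) ^ 2" by (simp add: fP_def tr)
  ultimately show ?thesis using inverse_beta_powers_bounds[OF nn pos] by simp
qed

lemma filterlim_at_top_if_inverse_square_le:
  fixes b f :: "nat \<Rightarrow> real"
  assumes b: "\<And>m. 0 < b m" and f: "\<And>m. 1 / b m ^ 2 \<le> f m" and lim: "b \<longlonglongrightarrow> 0"
  shows "filterlim f at_top sequentially"
proof -
  have "(\<lambda>m. b m ^ 2) \<longlonglongrightarrow> 0" using tendsto_power[OF lim, of 2] by simp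
  then have "filterlim (\<lambda>m. inverse (b m ^ 2)) at_top sequentially"
    by (rule filterlim_inverse_at_top) (intro always_eventually allI zero_less_power b)
  then show ?thesis
    by (rule filterlim_at_top_mono) (simp add: f inverse_eq_divide)
qed

lemma tendsto_one_if_between_inverse_powers:
  fixes b f :: "nat \<Rightarrow> real"
  assumes "\<And>m. 1 / b m ^ 2 \<le> f m" "\<And>m. f m \<le> 1 / b m ^ 6" and lim: "b \<longlonglongrightarrow> 1"
  shows "f \<longlonglongrightarrow> 1"
proof (rule tendsto_sandwich)
  show "(\<lambda>m. 1 / b m ^ 2) \<longlonglongrightarrow> 1"
    using tendsto_divide[OF tendsto_const[of 1] tendsto_power[OF lim, of 2]] by simp
  show "(\<lambda>m. 1 / b m ^ 6) \<longlonglongrightarrow> 1"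
    using tendsto_divide[OF tendsto_const[of 1] tendsto_power[OF lim, of 6]] by simp
qed (use assms in auto)

section \<open>Chi-squared laws\<close>

lemma chisq_density_nonneg: "0 < f \<Longrightarrow> 0 \<le> chisq_density f t"
  by (auto simp: chisq_density_def intro!: divide_nonneg_pos mult_pos_pos Gamma_real_pos)

lemma borel_measurable_chisq_density [measurable]: "chisq_density f \<in> borel_measurable borel"
  unfolding chisq_density_def by measurable

lemma chisq_density_pos:
  "0 < t \<Longrightarrow> chisq_density f t = t powr (f/2 - 1) * exp (- t/2) / (2 powr (f/2) * Gamma (f/2))"
  by (simp add: chisq_density_def)

lemma ennreal_chisq_density_double:
  assumes f: "0 < f"
  shows "ennreal (chisq_density f (2 * x)) =
    ennreal (1 / (2 * Gamma (f/2))) * ennreal (indicator {0..} x * x powr (f/2 - 1) / exp x)"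
proof (cases "0 < x")
  case True
  have g: "0 < Gamma (f/2)" using f by (intro Gamma_real_pos) simp
  have "(2 * x) powr (f/2 - 1) = 2 powr (f/2 - 1) * x powr (f/2 - 1)"
    using True by (simp add: powr_mult)
  moreover have "2 powr (f/2) = 2 * 2 powr (f/2 - 1)" by (simp add: powr_diff)
  moreover have "exp (- (2 * x) / 2) = 1 / exp x" by (simp add: exp_minus inverse_eq_divide)
  ultimately have "chisq_density f (2 * x) = (1 / (2 * Gamma (f/2))) * (indicator {0..} x * x powr (f/2 - 1) / exp x)"
    using True g by (simp add: chisq_density_def)
  then show ?thesis using g True by (simp add: ennreal_mult[symmetric])
next
  case False
  then show ?thesis by (auto simp: chisq_density_def indicator_def)
qed

lemma nn_integral_chisq_density:
  assumes f: "0 < f"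
  shows "(\<integral>\<^sup>+ t. ennreal (chisq_density f t) \<partial>lborel) = 1"
proof -
  have g: "0 < Gamma (f/2)" using f by (intro Gamma_real_pos) simp
  have "(\<integral>\<^sup>+ t. ennreal (chisq_density f t) \<partial>lborel)
      = ennreal \<bar>2::real\<bar> * (\<integral>\<^sup>+ x. ennreal (chisq_density f (0 + 2 * x)) \<partial>lborel)"
    by (rule nn_integral_real_affine) auto
  also have "\<dots> = 2 * (ennreal (1 / (2 * Gamma (f/2)))
      * (\<integral>\<^sup>+ x. ennreal (indicator {0..} x * x powr (f/2 - 1) / exp x) \<partial>lborel))"
    by (simp only: ennreal_chisq_density_double[OF f] add_0) (simp add: nn_integral_cmult)
  also have "(\<integral>\<^sup>+ x. ennreal (indicator {0..} x * x powr (f/2 - 1) / exp x) \<partial>lborel) = ennreal (Gamma (f/2))"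
    using Gamma_conv_nn_integral_real[of "f/2"] f by simp
  also have "2 * (ennreal (1 / (2 * Gamma (f/2))) * ennreal (Gamma (f/2)))
      = ennreal 2 * ennreal (1 / (2 * Gamma (f/2)) * Gamma (f/2))"
    using g by (subst ennreal_mult) auto
  also have "\<dots> = ennreal (2 * (1 / (2 * Gamma (f/2)) * Gamma (f/2)))"
    using g by (subst ennreal_mult) auto
  also have "2 * (1 / (2 * Gamma (f/2)) * Gamma (f/2)) = 1" using g by simp
  finally show ?thesis by simp
qed

lemma integrable_chisq_density: "0 < f \<Longrightarrow> integrable lborel (chisq_density f)"
  by (rule integrableI_nonneg) (use nn_integral_chisq_density chisq_density_nonneg in auto)

lemma integral_chisq_density: "0 < f \<Longrightarrow> (\<integral>t. chisq_density f t \<partial>lborel) = 1"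
  by (subst integral_eq_nn_integral) (use nn_integral_chisq_density chisq_density_nonneg in auto)

lemma measure_density_eq_integral:
  fixes g :: "real \<Rightarrow> real"
  assumes [measurable]: "g \<in> borel_measurable borel" "A \<in> sets borel" and nn: "\<And>x. 0 \<le> g x"
  shows "measure (density lborel g) A = (\<integral>x. g x * indicator A x \<partial>lborel)"
proof -
  have "measure (density lborel g) A = enn2real (\<integral>\<^sup>+ x. ennreal (g x) * indicator A x \<partial>lborel)"
    by (simp add: measure_def emeasure_density)
  also have "(\<integral>\<^sup>+ x. ennreal (g x) * indicator A x \<partial>lborel) = (\<integral>\<^sup>+ x. ennreal (g x * indicator A x) \<partial>lborel)"
    by (intro nn_integral_cong) (auto simp: indicator_def)
  also have "enn2real \<dots> = (\<integral>x. g x * indicator A x \<partial>lborel)"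
    by (subst integral_eq_nn_integral) (use nn in auto)
  finally show ?thesis .
qed

lemma cdf_K_distribution:
  assumes f: "0 < f"
  shows "cdf (K_distribution f) x = (\<integral>t. chisq_density f t * indicator {..f + sqrt (2 * f) * x} t \<partial>lborel)"
proof -
  have "(\<lambda>t. (t - f) / sqrt (2 * f)) -` {..x} = {..f + sqrt (2 * f) * x}"
    using f by (auto simp: pos_divide_le_eq algebra_simps)
  then have "cdf (K_distribution f) x = measure (chisq_distribution f) {..f + sqrt (2 * f) * x}"
    unfolding cdf_def2 K_distribution_def by (subst measure_distr) (auto simp: chisq_distribution_def)
  also have "\<dots> = (\<integral>t. chisq_density f t * indicator {..f + sqrt (2 * f) * x} t \<partial>lborel)"
    unfolding chisq_distribution_def
    by (rule measure_density_eq_integral) (auto intro: chisq_density_nonneg[OF f])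
  finally show ?thesis .
qed

lemma integral_dominated_convergence_eventually:
  fixes s :: "nat \<Rightarrow> real \<Rightarrow> real" and w f :: "real \<Rightarrow> real"
  assumes [measurable]: "f \<in> borel_measurable lborel" "\<And>i. s i \<in> borel_measurable lborel"
    and w: "integrable lborel w"
    and lim: "AE x in lborel. (\<lambda>i. s i x) \<longlonglongrightarrow> f x"
    and bound: "\<forall>\<^sub>F i in sequentially. AE x in lborel. norm (s i x) \<le> w x"
  shows "(\<lambda>i. integral\<^sup>L lborel (s i)) \<longlonglongrightarrow> integral\<^sup>L lborel f"
proof -
  obtain N where N: "\<And>n. N \<le> n \<Longrightarrow> AE x in lborel. norm (s n x) \<le> w x"
    using bound by (auto simp: eventually_sequentially)
  have "(\<lambda>i. integral\<^sup>L lborel (s (i + N))) \<longlonglongrightarrow> integral\<^sup>L lborel f"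
  proof (rule integral_dominated_convergence[OF _ _ w])
    show "AE x in lborel. (\<lambda>i. s (i + N) x) \<longlonglongrightarrow> f x"
      using lim by eventually_elim (rule LIMSEQ_ignore_initial_segment)
    show "AE x in lborel. norm (s (i + N) x) \<le> w x" for i by (rule N) simp
  qed auto
  then show ?thesis by (rule LIMSEQ_offset)
qed

lemma tendsto_chisq_density:
  assumes lim: "g \<longlonglongrightarrow> f0" and f0: "0 < f0"
  shows "(\<lambda>m. chisq_density (g m) t) \<longlonglongrightarrow> chisq_density f0 t"
proof (cases "0 < t")
  case True
  have "f0/2 \<notin> \<int>\<^sub>\<le>\<^sub>0" using f0 by (auto elim!: nonpos_Ints_cases)
  moreover have "0 < Gamma (f0/2)" using f0 by (intro Gamma_real_pos) simp
  ultimately have "(\<lambda>m. t powr (g m/2 - 1) * exp (- t/2) / (2 powr (g m/2) * Gamma (g m/2)))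
     \<longlonglongrightarrow> t powr (f0/2 - 1) * exp (- t/2) / (2 powr (f0/2) * Gamma (f0/2))"
    using True by (intro tendsto_intros tendsto_Gamma lim) auto
  then show ?thesis using True by (simp add: chisq_density_pos)
qed (simp add: chisq_density_def)

lemma chisq_density_eventually_dominated:
  assumes lim: "g \<longlonglongrightarrow> f0" and f0: "0 < f0"
  obtains w where "integrable lborel w" "\<forall>\<^sub>F m in sequentially. \<forall>t. chisq_density (g m) t \<le> w t"
proof -
  define c where "c f = 1 / (2 powr (f/2) * Gamma (f/2))" for f :: real
  have "f0/2 \<notin> \<int>\<^sub>\<le>\<^sub>0" using f0 by (auto elim!: nonpos_Ints_cases)
  moreover have "0 < Gamma (f0/2)" using f0 by (intro Gamma_real_pos) simp
  ultimately have "(\<lambda>m. c (g m)) \<longlonglongrightarrow> c f0"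
    unfolding c_def by (intro tendsto_intros tendsto_Gamma lim) auto
  then have ev_c: "\<forall>\<^sub>F m in sequentially. c (g m) < c f0 + 1" by (rule order_tendstoD) simp
  have ev_g: "\<forall>\<^sub>F m in sequentially. f0/2 < g m \<and> g m < 2 * f0"
    using order_tendstoD(1)[OF lim, of "f0/2"] order_tendstoD(2)[OF lim, of "2 * f0"] f0
    by (auto elim: eventually_elim2)
  \<comment> \<open>For \<open>f0/2 < f < 2 f0\<close>, \<open>t powr (f/2 - 1) \<le> t powr (f0/4 - 1) + t powr (f0 - 1)\<close>, and the two
    summands are multiples of the chi-squared densities with \<open>f0/2\<close> and \<open>2 f0\<close> degrees of freedom.\<close>
  define w where "w t = (c f0 + 1) * (2 powr (f0/4) * Gamma (f0/4) * chisq_density (f0/2) t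
      + 2 powr f0 * Gamma f0 * chisq_density (2 * f0) t)" for t
  have "integrable lborel w"
    unfolding w_def using integrable_chisq_density[of "f0/2"] integrable_chisq_density[of "2 * f0"] f0 by auto
  moreover have "\<forall>\<^sub>F m in sequentially. \<forall>t. chisq_density (g m) t \<le> w t"
    using ev_c ev_g
  proof eventually_elim
    case (elim m)
    show ?case
    proof
      fix t :: real
      show "chisq_density (g m) t \<le> w t"
      proof (cases "0 < t")
        case False
        then show ?thesis by (simp add: w_def chisq_density_def)
      next
        case t: True
        have "t powr (g m/2 - 1) \<le> t powr (f0/4 - 1) + t powr (f0 - 1)"
        proof (cases "t \<le> 1")
          case True
          then have "t powr (g m/2 - 1) \<le> t powr (f0/4 - 1)" using elim t by (intro powr_mono') auto
          then show ?thesis by (simp add: add_increasing2)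
        next
          case False
          then have "t powr (g m/2 - 1) \<le> t powr (f0 - 1)" using elim t by (intro powr_mono) auto
          then show ?thesis by (simp add: add_increasing)
        qed
        moreover have "0 \<le> c (g m)" using elim f0 by (simp add: c_def Gamma_real_pos less_imp_le)
        ultimately have "c (g m) * (t powr (g m/2 - 1) * exp (- t/2))
            \<le> (c f0 + 1) * ((t powr (f0/4 - 1) + t powr (f0 - 1)) * exp (- t/2))"
          using elim by (intro mult_mono) auto
        moreover have "0 < Gamma (f0/4)" "0 < Gamma f0" using f0 by (auto intro: Gamma_real_pos)
        ultimately show ?thesis using t by (simp add: w_def chisq_density_pos c_def field_simps)
      qed
    qed
  qed
  ultimately show thesis by (rule that)
qed

lemma tendsto_cdf_K_distribution:
  assumes pos: "\<And>m. 0 < g m" and lim: "g \<longlonglongrightarrow> f0" and f0: "0 < f0"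
  shows "(\<lambda>m. cdf (K_distribution (g m)) x) \<longlonglongrightarrow> cdf (K_distribution f0) x"
proof -
  define c where "c m = g m + sqrt (2 * g m) * x" for m
  define c0 where "c0 = f0 + sqrt (2 * f0) * x"
  have c_lim: "c \<longlonglongrightarrow> c0" unfolding c_def c0_def using lim by (auto intro!: tendsto_eq_intros)
  obtain w where w: "integrable lborel w" and dom: "\<forall>\<^sub>F m in sequentially. \<forall>t. chisq_density (g m) t \<le> w t"
    using chisq_density_eventually_dominated[OF lim f0] .
  have bound: "\<forall>\<^sub>F m in sequentially. AE t in lborel. norm (chisq_density (g m) t * indicator {..c m} t) \<le> w t"
    using dom
  proof eventually_elim
    case (elim m)
    have "norm (chisq_density (g m) t * indicator {..c m} t) \<le> w t" for t
      using elim[rule_format, of t] chisq_density_nonneg[OF pos, of m t] by (auto simp: indicator_def)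
    then show ?case by simp
  qed
  have "AE t in lborel. t \<noteq> c0" by (rule AE_lborel_singleton)
  then have "AE t in lborel. (\<lambda>m. chisq_density (g m) t * indicator {..c m} t) \<longlonglongrightarrow> chisq_density f0 t * indicator {..c0} t"
  proof eventually_elim
    case (elim t)
    have "\<forall>\<^sub>F m in sequentially. indicator {..c m} t = (indicator {..c0} t :: real)"
    proof (cases "t < c0")
      case True
      show ?thesis using order_tendstoD(1)[OF c_lim True]
        by eventually_elim (use True in \<open>auto simp: indicator_def\<close>)
    next
      case False
      then have "c0 < t" using elim by simp
      show ?thesis using order_tendstoD(2)[OF c_lim \<open>c0 < t\<close>]
        by eventually_elim (use \<open>c0 < t\<close> in \<open>auto simp: indicator_def\<close>)
    qed
    then have "(\<lambda>m. indicator {..c m} t :: real) \<longlonglongrightarrow> indicator {..c0} t" by (rule tendsto_eventually)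
    then show ?case by (intro tendsto_mult tendsto_chisq_density[OF lim f0])
  qed
  then have "(\<lambda>m. \<integral>t. chisq_density (g m) t * indicator {..c m} t \<partial>lborel) \<longlonglongrightarrow> (\<integral>t. chisq_density f0 t * indicator {..c0} t \<partial>lborel)"
    by (intro integral_dominated_convergence_eventually[OF _ _ w _ bound]) auto
  then show ?thesis using pos f0 by (simp add: cdf_K_distribution c_def c0_def)
qed

section \<open>The limit \<open>f \<rightarrow> \<infinity>\<close>\<close>

text \<open>The substitution \<open>t = f + sqrt (2 f) y = f (1 + y/s)\<close>, \<open>s = sqrt (f/2)\<close>, turns the
  chi-squared density into \<open>K_kernel_const f * K_kernel f y\<close>, the density of \<open>K\<^sub>f\<close>.\<close>

definition K_kernel :: "real \<Rightarrow> real \<Rightarrow> real" where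
  "K_kernel f y = (if 0 < 1 + y / sqrt (f/2)
     then (1 + y / sqrt (f/2)) powr (f/2 - 1) * exp (- (sqrt (f/2) * y)) else 0)"

definition K_kernel_const :: "real \<Rightarrow> real" where
  "K_kernel_const f = sqrt (2 * f) * f powr (f/2 - 1) * exp (- f/2) / (2 powr (f/2) * Gamma (f/2))"

lemma borel_measurable_K_kernel [measurable]: "K_kernel f \<in> borel_measurable borel"
  unfolding K_kernel_def by measurable

lemma K_kernel_nonneg: "0 \<le> K_kernel f y"
  by (simp add: K_kernel_def)

lemma K_kernel_const_pos: "0 < f \<Longrightarrow> 0 < K_kernel_const f"
  unfolding K_kernel_const_def by (intro divide_pos_pos mult_pos_pos Gamma_real_pos) auto

lemma chisq_density_affine_eq_K_kernel:
  assumes f: "0 < f"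
  shows "sqrt (2 * f) * chisq_density f (f + sqrt (2 * f) * y) = K_kernel_const f * K_kernel f y"
proof -
  define s where "s = sqrt (f/2)"
  have s: "0 < s" using f by (simp add: s_def)
  have two_s: "sqrt (2 * f) = 2 * s"
    by (intro real_sqrt_unique) (use s f in \<open>simp_all add: s_def power_mult_distrib\<close>)
  have f_s: "f = 2 * s ^ 2" using f by (simp add: s_def)
  have t: "f + sqrt (2 * f) * y = f * (1 + y / s)"
    unfolding two_s using s by (simp add: f_s field_simps power2_eq_square)
  show ?thesis
  proof (cases "0 < 1 + y / s")
    case True
    have "(f * (1 + y / s)) powr (f/2 - 1) = f powr (f/2 - 1) * (1 + y / s) powr (f/2 - 1)"
      using True f by (simp add: powr_mult)
    moreover have "exp (- (f * (1 + y / s)) / 2) = exp (- f/2) * exp (- (s * y))"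
    proof -
      have "- (f * (1 + y / s)) / 2 = - f/2 + - (s * y)" using s by (simp add: f_s field_simps power2_eq_square)
      then show ?thesis by (simp only: exp_add)
    qed
    ultimately show ?thesis
      using True f unfolding t
      by (simp add: chisq_density_pos K_kernel_def K_kernel_const_def two_s s_def[symmetric])
  next
    case False
    then have "f * (1 + y / s) \<le> 0" using f by (simp add: mult_nonneg_nonpos)
    then show ?thesis using False unfolding t by (simp add: chisq_density_def K_kernel_def s_def[symmetric])
  qed
qed

lemma integral_K_kernel:
  assumes f: "0 < f" and [measurable]: "A \<in> sets borel"
  shows "(\<integral>y. K_kernel f y * indicator A y \<partial>lborel) = measure (K_distribution f) A / K_kernel_const f"
proof -
  define c where "c = sqrt (2 * f)"
  have c: "0 < c" using f by (simp add: c_def)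
  let ?P = "(\<lambda>t. (t - f) / c) -` A"
  have "(\<lambda>t. (t - f) / c) \<in> borel_measurable borel" by measurable
  from measurable_sets[OF this assms(2)] have [measurable]: "?P \<in> sets borel" by simp
  have P: "indicator ?P (f + c * y) = (indicator A y :: real)" for y
    using c by (simp add: indicator_def)
  have "measure (K_distribution f) A = measure (chisq_distribution f) ?P"
    unfolding K_distribution_def c_def[symmetric] by (subst measure_distr) (auto simp: chisq_distribution_def)
  also have "\<dots> = (\<integral>t. chisq_density f t * indicator ?P t \<partial>lborel)"
    unfolding chisq_distribution_def by (rule measure_density_eq_integral) (auto intro: chisq_density_nonneg[OF f])
  also have "\<dots> = c * (\<integral>y. chisq_density f (f + c * y) * indicator A y \<partial>lborel)"
    using c by (subst lborel_integral_real_affine[where c = c and t = f]) (simp_all add: P)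
  also have "\<dots> = (\<integral>y. K_kernel_const f * (K_kernel f y * indicator A y) \<partial>lborel)"
    by (simp flip: integral_mult_right_zero add: mult.assoc[symmetric] c_def chisq_density_affine_eq_K_kernel[OF f])
  also have "\<dots> = K_kernel_const f * (\<integral>y. K_kernel f y * indicator A y \<partial>lborel)" by simp
  finally show ?thesis using K_kernel_const_pos[OF f] by simp
qed

lemma cdf_K_distribution_kernel:
  assumes f: "0 < f"
  shows "cdf (K_distribution f) x = (\<integral>y. K_kernel f y * indicator {..x} y \<partial>lborel) / (\<integral>y. K_kernel f y \<partial>lborel)"
proof -
  have "measure (K_distribution f) UNIV = measure (chisq_distribution f) UNIV"
    unfolding K_distribution_def by (subst measure_distr) (auto simp: chisq_distribution_def)
  also have "\<dots> = 1"
    unfolding chisq_distribution_def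
    using measure_density_eq_integral[of "chisq_density f" UNIV] integral_chisq_density[OF f] chisq_density_nonneg[OF f]
    by simp
  finally have "(\<integral>y. K_kernel f y \<partial>lborel) = 1 / K_kernel_const f"
    using integral_K_kernel[OF f, of UNIV] by simp
  then show ?thesis using integral_K_kernel[OF f, of "{..x}"] K_kernel_const_pos[OF f] by (simp add: cdf_def2)
qed

lemma ln_add_one_sub_le_nonneg:
  fixes u :: real
  assumes u: "0 \<le> u"
  shows "ln (1 + u) - u \<le> - (u ^ 2 / (2 * (1 + u)))"
proof -
  define F where "F v = 2 * v + v ^ 2 - 2 * (1 + v) * ln (1 + v)" for v :: real
  have "F 0 \<le> F u"
  proof (rule DERIV_nonneg_imp_nondecreasing[OF u])
    fix x :: real assume x: "0 \<le> x" "x \<le> u"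
    have "(F has_real_derivative (2 + 2 * x - 2 * (ln (1 + x) + 1))) (at x)"
      unfolding F_def using x
      by (auto intro!: derivative_eq_intros simp: power2_eq_square algebra_simps)
        (simp add: add_divide_distrib[symmetric] divide_eq_eq)
    moreover have "0 \<le> 2 + 2 * x - 2 * (ln (1 + x) + 1)" using ln_add_one_self_le_self[of x] x by simp
    ultimately show "\<exists>y. (F has_real_derivative y) (at x) \<and> 0 \<le> y" by auto
  qed
  then have "ln (1 + u) \<le> (2 * u + u ^ 2) / (2 * (1 + u))" using u by (simp add: F_def field_simps)
  also have "\<dots> = u - u ^ 2 / (2 * (1 + u))" using u by (simp add: field_simps power2_eq_square)
  finally show ?thesis by simp
qed

lemma ln_add_one_sub_le_nonpos:
  fixes u :: real
  assumes u: "-1 < u" "u \<le> 0"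
  shows "ln (1 + u) - u \<le> - (u ^ 2 / 2)"
proof -
  define F where "F v = ln (1 + v) - v + v ^ 2 / 2" for v :: real
  have "F u \<le> F 0"
  proof (rule DERIV_nonneg_imp_nondecreasing[OF u(2)])
    fix x :: real assume x: "u \<le> x" "x \<le> 0"
    have "(F has_real_derivative (1 / (1 + x) - 1 + x)) (at x)"
      unfolding F_def using x u by (auto intro!: derivative_eq_intros simp: field_simps power2_eq_square)
    moreover have "1 / (1 + x) - 1 + x = x ^ 2 / (1 + x)" using x u by (simp add: field_simps power2_eq_square)
    moreover have "0 \<le> x ^ 2 / (1 + x)" using x u by simp
    ultimately show "\<exists>y. (F has_real_derivative y) (at x) \<and> 0 \<le> y" by auto
  qed
  then show ?thesis by (simp add: F_def)
qed

lemma K_kernel_eq_exp: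
  assumes f: "0 < f" and pos: "0 < 1 + y / sqrt (f/2)"
  shows "K_kernel f y = exp ((f/2 - 1) * (ln (1 + y / sqrt (f/2)) - y / sqrt (f/2)) - y / sqrt (f/2))"
proof -
  define s u where "s = sqrt (f/2)" and "u = y / s"
  have s: "0 < s" and s2: "s ^ 2 = f/2" using f by (simp_all add: s_def)
  have sy: "s * y = f/2 * u" unfolding u_def s2[symmetric] using s by (simp add: power2_eq_square)
  have "K_kernel f y = exp ((f/2 - 1) * ln (1 + u)) * exp (- (s * y))"
    using pos by (simp add: K_kernel_def powr_def s_def u_def)
  also have "\<dots> = exp ((f/2 - 1) * ln (1 + u) + - (s * y))" by (rule exp_add[symmetric])
  also have "(f/2 - 1) * ln (1 + u) + - (s * y) = (f/2 - 1) * (ln (1 + u) - u) - u"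
    unfolding sy by (simp add: algebra_simps)
  finally show ?thesis by (simp add: s_def u_def)
qed

lemma K_kernel_exponent_le:
  fixes k y :: real
  assumes k: "2 \<le> k" and pos: "0 < 1 + y / sqrt k"
  defines "u \<equiv> y / sqrt k"
  shows "(k - 1) * (ln (1 + u) - u) - u \<le> 2 - \<bar>y\<bar> / 4"
proof -
  define s where "s = sqrt k"
  have s1: "1 \<le> s" and s2: "s ^ 2 = k" using k by (simp_all add: s_def)
  have yu: "y = s * u" using s1 by (simp add: u_def s_def)
  have "(k - 1) * u ^ 2 - y ^ 2 / 2 = (k - 2) * y ^ 2 / (2 * k)"
    using s1 unfolding u_def s_def[symmetric] s2[symmetric] by (simp add: power_divide field_simps)
  also have "\<dots> \<ge> 0" using k by (intro divide_nonneg_pos mult_nonneg_nonneg) auto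
  finally have ku: "y ^ 2 / 2 \<le> (k - 1) * u ^ 2" by simp
  show ?thesis
  proof (cases "0 \<le> y")
    case True
    have u0: "0 \<le> u" using True s1 by (simp add: u_def s_def)
    have uy: "u \<le> y" unfolding yu using mult_right_mono[OF s1 u0] by simp
    have "(k - 1) * (ln (1 + u) - u) \<le> (k - 1) * - (u ^ 2 / (2 * (1 + u)))"
      using ln_add_one_sub_le_nonneg[OF u0] k by (intro mult_left_mono) auto
    also have "\<dots> \<le> - ((y ^ 2 / 2) / (2 * (1 + y)))"
    proof -
      have "(y ^ 2 / 2) / (2 * (1 + y)) \<le> (y ^ 2 / 2) / (2 * (1 + u))" using u0 uy by (intro divide_left_mono) auto
      also have "\<dots> \<le> (k - 1) * u ^ 2 / (2 * (1 + u))" using ku u0 by (intro divide_right_mono) auto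
      finally show ?thesis by simp
    qed
    also have "\<dots> \<le> 1/4 - y/4" using True by (simp add: field_simps power2_eq_square)
    finally show ?thesis using True u0 by simp
  next
    case False
    have u: "-1 < u" "u \<le> 0" using False pos s1 by (auto simp: u_def s_def divide_nonpos_pos)
    have "(k - 1) * (ln (1 + u) - u) \<le> (k - 1) * - (u ^ 2 / 2)"
      using ln_add_one_sub_le_nonpos[OF u] k by (intro mult_left_mono) auto
    also have "\<dots> \<le> - (y ^ 2 / 4)" using ku by simp
    also have "\<dots> \<le> 1 - \<bar>y\<bar> / 4"
      using zero_le_power2[of "\<bar>y\<bar> - 1/2"] by (simp add: power2_eq_square power2_abs algebra_simps)
    finally show ?thesis using u by simp
  qed
qed

lemma K_kernel_le:
  assumes f: "4 \<le> f"
  shows "K_kernel f y \<le> exp (2 - \<bar>y\<bar> / 4)"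
proof (cases "0 < 1 + y / sqrt (f/2)")
  case True
  then show ?thesis using K_kernel_eq_exp[OF _ True] K_kernel_exponent_le[of "f/2" y] f by simp
qed (simp add: K_kernel_def)

lemma tendsto_K_kernel:
  assumes lim: "filterlim f at_top sequentially"
  shows "(\<lambda>m. K_kernel (f m) y) \<longlonglongrightarrow> exp (- (y ^ 2 / 2))"
proof -
  define E where "E k = (k - 1) * ln (1 + y / sqrt k) - sqrt k * y" for k :: real
  have "(E \<longlongrightarrow> - (y * y / 2)) at_top" unfolding E_def by real_asymp
  then have E: "(E \<longlongrightarrow> - (y ^ 2 / 2)) at_top" by (simp add: power2_eq_square)
  have ev: "\<forall>\<^sub>F k in at_top. 0 < 1 + y / sqrt k" by real_asymp
  have lim2: "filterlim (\<lambda>m. f m / 2) at_top sequentially"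
    using filterlim_tendsto_pos_mult_at_top[OF tendsto_const _ lim, of "1/2"] by simp
  have "(\<lambda>m. exp (E (f m / 2))) \<longlonglongrightarrow> exp (- (y ^ 2 / 2))"
    by (intro tendsto_exp filterlim_compose[OF E lim2])
  moreover have "\<forall>\<^sub>F m in sequentially. exp (E (f m / 2)) = K_kernel (f m) y"
    using eventually_compose_filterlim[OF ev lim2]
  proof eventually_elim
    case (elim m)
    have "K_kernel (f m) y = exp ((f m / 2 - 1) * ln (1 + y / sqrt (f m / 2))) * exp (- (sqrt (f m / 2) * y))"
      using elim by (simp add: K_kernel_def powr_def)
    then show ?case unfolding E_def exp_add[symmetric] by simp
  qed
  ultimately show ?thesis by (rule Lim_transform_eventually)
qed

lemma chisq_density_two: "0 < t \<Longrightarrow> chisq_density 2 t = exp (- t / 2) / 2"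
  by (simp add: chisq_density_def)

lemma chisq_density_nonpos: "t \<le> 0 \<Longrightarrow> chisq_density f t = 0"
  by (simp add: chisq_density_def)

lemma integrable_exp_neg_abs:
  fixes a :: real
  assumes a: "0 < a"
  shows "integrable lborel (\<lambda>y. exp (- a * \<bar>y\<bar>))"
proof -
  \<comment> \<open>Away from 0, \<open>exp (- a \<bar>y\<bar>)\<close> is a sum of two rescaled chi-squared densities with 2 degrees of freedom.\<close>
  let ?h = "\<lambda>y. 2 * chisq_density 2 (0 + (2 * a) * y) + 2 * chisq_density 2 (0 + (- 2 * a) * y)"
  have "integrable lborel (\<lambda>y. chisq_density 2 (0 + (2 * a) * y))"
    by (rule lborel_integrable_real_affine[OF integrable_chisq_density]) (use a in auto)
  moreover have "integrable lborel (\<lambda>y. chisq_density 2 (0 + (- 2 * a) * y))"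
    by (rule lborel_integrable_real_affine[OF integrable_chisq_density]) (use a in auto)
  ultimately have int: "integrable lborel ?h" by auto
  have "AE y in lborel. y \<noteq> 0" by (rule AE_lborel_singleton)
  then have "AE y in lborel. ?h y = exp (- a * \<bar>y\<bar>)"
  proof eventually_elim
    case (elim y)
    show ?case
    proof (cases "0 < y")
      case True
      then have "0 < 2 * a * y" "- 2 * a * y \<le> 0" using a by simp_all
      then show ?thesis using True by (simp add: chisq_density_two chisq_density_nonpos)
    next
      case False
      then have "y < 0" using elim by simp
      then have "a * y < 0" using a by (simp add: mult_pos_neg)
      then have "0 < - 2 * a * y" "2 * a * y \<le> 0" by simp_all
      then show ?thesis using False by (simp add: chisq_density_two chisq_density_nonpos)
    qed
  qed
  then show ?thesis by (intro integrable_cong_AE_imp[OF int]) simp_all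
qed

lemma tendsto_integral_K_kernel:
  assumes lim: "filterlim f at_top sequentially" and [measurable]: "A \<in> sets borel"
  shows "(\<lambda>m. \<integral>y. K_kernel (f m) y * indicator A y \<partial>lborel) \<longlonglongrightarrow> (\<integral>y. exp (- (y ^ 2 / 2)) * indicator A y \<partial>lborel)"
proof (rule integral_dominated_convergence_eventually)
  have "exp (2 - \<bar>y\<bar> / 4) = exp 2 * exp (- (1/4) * \<bar>y\<bar>)" for y :: real
    unfolding exp_add[symmetric] by (rule arg_cong[where f = exp]) simp
  then show "integrable lborel (\<lambda>y::real. exp (2 - \<bar>y\<bar> / 4))"
    using integrable_exp_neg_abs[of "1/4"] by simp
  show "AE y in lborel. (\<lambda>m. K_kernel (f m) y * indicator A y) \<longlonglongrightarrow> exp (- (y ^ 2 / 2)) * indicator A y"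
    by (intro AE_I2 tendsto_mult tendsto_const tendsto_K_kernel lim)
  have "\<forall>\<^sub>F m in sequentially. 4 \<le> f m" using lim by (simp add: filterlim_at_top)
  then show "\<forall>\<^sub>F m in sequentially. AE y in lborel. norm (K_kernel (f m) y * indicator A y) \<le> exp (2 - \<bar>y\<bar> / 4)"
    by eventually_elim (use K_kernel_le K_kernel_nonneg in \<open>auto simp: indicator_def intro: order_trans\<close>)
qed auto

lemma tendsto_cdf_K_distribution_std_normal:
  assumes pos: "\<And>m. 0 < f m" and lim: "filterlim f at_top sequentially"
  shows "(\<lambda>m. cdf (K_distribution (f m)) x) \<longlonglongrightarrow> cdf std_normal_distribution x"
proof -
  let ?e = "\<lambda>y. exp (- (y ^ 2 / 2))"
  have e: "?e y = sqrt (2 * pi) * std_normal_density y" for y by (simp add: std_normal_density_def)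
  have total: "(\<integral>y. ?e y \<partial>lborel) = sqrt (2 * pi)" unfolding e by simp
  have "cdf std_normal_distribution x = (\<integral>y. std_normal_density y * indicator {..x} y \<partial>lborel)"
    unfolding cdf_def2 by (rule measure_density_eq_integral) auto
  also have "\<dots> = (\<integral>y. ?e y * indicator {..x} y / sqrt (2 * pi) \<partial>lborel)"
    by (rule arg_cong[where f = "integral\<^sup>L lborel"]) (simp add: std_normal_density_def fun_eq_iff)
  also have "\<dots> = (\<integral>y. ?e y * indicator {..x} y \<partial>lborel) / (\<integral>y. ?e y \<partial>lborel)" by (simp add: total)
  finally have normal: "cdf std_normal_distribution x = \<dots>" .
  have "(\<lambda>m. (\<integral>y. K_kernel (f m) y * indicator {..x} y \<partial>lborel) / (\<integral>y. K_kernel (f m) y \<partial>lborel))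
      \<longlonglongrightarrow> (\<integral>y. ?e y * indicator {..x} y \<partial>lborel) / (\<integral>y. ?e y \<partial>lborel)"
    using tendsto_integral_K_kernel[OF lim, of "{..x}"] tendsto_integral_K_kernel[OF lim, of UNIV] total
    by (intro tendsto_divide) simp_all
  then show ?thesis using pos by (simp add: cdf_K_distribution_kernel normal)
qed

lemma weak_conv_K_distribution_std_normal:
  assumes "\<And>m. 0 < f m" "filterlim f at_top sequentially"
  shows "weak_conv_m (\<lambda>m. K_distribution (f m)) std_normal_distribution"
  using tendsto_cdf_K_distribution_std_normal[OF assms] by (simp add: weak_conv_m_def weak_conv_def)

lemma weak_conv_K_distribution_continuous:
  assumes "\<And>m. 0 < f m" "f \<longlonglongrightarrow> f0" "0 < f0"
  shows "weak_conv_m (\<lambda>m. K_distribution (f m)) (K_distribution f0)"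
  using tendsto_cdf_K_distribution[OF assms] by (simp add: weak_conv_m_def weak_conv_def)

theorem theorem3:
  fixes a d :: "nat \<Rightarrow> nat"
    and n :: "nat \<Rightarrow> nat \<Rightarrow> nat"
    and \<Sigma> TW TS :: "nat \<Rightarrow> real Matrix.mat"
    and \<mu> :: "nat \<Rightarrow> nat \<Rightarrow> real Matrix.vec"
  defines "N \<equiv> \<lambda>m. \<Sum>i<a m. n m i"
    and "nmax \<equiv> \<lambda>m. Max (n m ` {..<a m})"
    and "T \<equiv> \<lambda>m. kron (a m) (d m) (TW m) (TS m)"
    and "V \<equiv> \<lambda>m. VN (a m) (d m) (n m) (\<Sigma> m)"
    and "muvec \<equiv> \<lambda>m. Matrix.vec (a m * d m) (\<lambda>r. \<mu> m (r div d m) $ (r mod d m))"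
  assumes a_pos: "\<And>m. a m \<ge> 1"
    and d_pos: "\<And>m. d m \<ge> 1"
    and n_pos: "\<And>m i. i < a m \<Longrightarrow> n m i \<ge> 1"
    and Sigma: "\<And>m. pos_def_mat (d m) (\<Sigma> m)"
    and TW: "\<And>m. sym_idem_nonzero (a m) (TW m)"
    and TS: "\<And>m. sym_idem_nonzero (d m) (TS m)"
    and mu_dim: "\<And>m i. i < a m \<Longrightarrow> \<mu> m i \<in> carrier_vec (d m)"
    and H0: "\<And>m. T m *\<^sub>v muvec m = 0\<^sub>v (a m * d m)"
    and N_lim: "filterlim (\<lambda>m. real (N m)) at_top sequentially"
    and framework:
      "(filterlim (\<lambda>m. real (a m)) at_top sequentially \<and> bounded (range (\<lambda>m. real (d m)))
          \<and> bounded (range (\<lambda>m. real (nmax m))))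
     \<or> (filterlim (\<lambda>m. real (a m)) at_top sequentially \<and> filterlim (\<lambda>m. real (d m)) at_top sequentially
          \<and> bounded (range (\<lambda>m. real (nmax m))))
     \<or> (filterlim (\<lambda>m. real (a m)) at_top sequentially \<and> filterlim (\<lambda>m. real (nmax m)) at_top sequentially
          \<and> bounded (range (\<lambda>m. real (d m))))
     \<or> (filterlim (\<lambda>m. real (d m)) at_top sequentially \<and> filterlim (\<lambda>m. real (nmax m)) at_top sequentially
          \<and> bounded (range (\<lambda>m. real (a m))))
     \<or> (filterlim (\<lambda>m. real (a m)) at_top sequentially \<and> filterlim (\<lambda>m. real (d m)) at_top sequentially
          \<and> filterlim (\<lambda>m. real (nmax m)) at_top sequentially)"
  shows "((\<lambda>m. beta1 (T m * V m * T m)) \<longlonglongrightarrow> 0 \<longrightarrow>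
            weak_conv_m (\<lambda>m. K_distribution (fP (T m) (V m))) std_normal_distribution)
       \<and> ((\<lambda>m. beta1 (T m * V m * T m)) \<longlonglongrightarrow> 1 \<longrightarrow>
            weak_conv_m (\<lambda>m. K_distribution (fP (T m) (V m)))
              (distr (chisq_distribution 1) borel (\<lambda>x. (x - 1) / sqrt 2)))"
proof -
  define \<beta> where "\<beta> = (\<lambda>m. beta1 (T m * V m * T m))"
  define F where "F = (\<lambda>m. fP (T m) (V m))"
  have bounds: "0 < \<beta> m \<and> 0 < F m \<and> 1 / \<beta> m ^ 2 \<le> F m \<and> F m \<le> 1 / \<beta> m ^ 6" for m
  proof -
    have "sym_idem_nonzero (a m * d m) (T m)" unfolding T_def by (rule sym_idem_nonzero_kron[OF TW TS])
    moreover have "pos_def_mat (a m * d m) (V m)"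
      unfolding V_def by (rule pos_def_VN[OF Sigma]) (use n_pos in force)
    ultimately show ?thesis unfolding \<beta>_def F_def by (rule beta1_fP_bounds)
  qed
  have F_pos: "0 < F m" for m using bounds by blast
  show ?thesis
  proof (intro conjI impI)
    assume "(\<lambda>m. beta1 (T m * V m * T m)) \<longlonglongrightarrow> 0"
    then have "\<beta> \<longlonglongrightarrow> 0" unfolding \<beta>_def .
    then have "filterlim F at_top sequentially"
      by (intro filterlim_at_top_if_inverse_square_le[of \<beta> F]) (use bounds in blast)+
    then show "weak_conv_m (\<lambda>m. K_distribution (fP (T m) (V m))) std_normal_distribution"
      unfolding F_def by (rule weak_conv_K_distribution_std_normal[OF F_pos[unfolded F_def]])
  next
    assume "(\<lambda>m. beta1 (T m * V m * T m)) \<longlonglongrightarrow> 1"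
    then have "\<beta> \<longlonglongrightarrow> 1" unfolding \<beta>_def .
    then have "F \<longlonglongrightarrow> 1"
      by (intro tendsto_one_if_between_inverse_powers[of \<beta> F]) (use bounds in blast)+
    then have "weak_conv_m (\<lambda>m. K_distribution (F m)) (K_distribution 1)"
      using F_pos by (intro weak_conv_K_distribution_continuous) auto
    moreover have "K_distribution 1 = distr (chisq_distribution 1) borel (\<lambda>x. (x - 1) / sqrt 2)"
      by (simp add: K_distribution_def)
    ultimately show "weak_conv_m (\<lambda>m. K_distribution (fP (T m) (V m)))
        (distr (chisq_distribution 1) borel (\<lambda>x. (x - 1) / sqrt 2))"
      by (simp add: F_def)
  qed
qed

end
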